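(* If $G$ is a (finite, loopless) multigraph and $f$ is a demand function for the line graph $L(G)$ such that each edge $e\in E(G)$ with endpoints $u,v$ satisfies $f(e) \leq 2 / (3\max\{d(u), d(v)\})$, then $L(G)$ has an $f$-coloring.
   Context: For a multigraph $G$, $\mu(uv)$ denotes the number of edges between $u$ and $v$ and $d(v)=\sum_{u\in N(v)}\mu(uv)$ is the number of edges incident to $v$. The line graph $L(G)$ has vertex set $E(G)$, two edges being adjacent when they share an endpoint. A demand function for a graph $H$ is a function $f: V(H)\to [0,1]\cap\mathbb{Q}$. A fractional coloring of $H$ assigns to each vertex a measurable subset of $[0,1]$ so that adjacent vertices receive disjoint sets; an $f$-coloring is a fractional coloring $\phi$ with Lebesgue measure of $\phi(x)$ at least $f(x)$ for every vertex $x$. *)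

theory Defs
  imports "HOL-Analysis.Analysis"
begin

text \<open>Parallel edges are distinct identifiers with the same endpoints.\<close>
definition multigraph :: "'v set \<Rightarrow> 'e set \<Rightarrow> ('e \<Rightarrow> 'v set) \<Rightarrow> bool" where
  "multigraph V E ends \<longleftrightarrow> finite V \<and> finite E \<and>
     (\<forall>e\<in>E. ends e \<subseteq> V \<and> card (ends e) = 2)"

definition mdegree :: "'e set \<Rightarrow> ('e \<Rightarrow> 'v set) \<Rightarrow> 'v \<Rightarrow> nat" where
  "mdegree E ends v = card {e\<in>E. v \<in> ends e}"

definition line_adj :: "'e set \<Rightarrow> ('e \<Rightarrow> 'v set) \<Rightarrow> 'e \<Rightarrow> 'e \<Rightarrow> bool" where
  "line_adj E ends e e' \<longleftrightarrow> e \<in> E \<and> e' \<in> E \<and> e \<noteq> e' \<and> ends e \<inter> ends e' \<noteq> {}"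

definition demand_function :: "'x set \<Rightarrow> ('x \<Rightarrow> real) \<Rightarrow> bool" where
  "demand_function X f \<longleftrightarrow> (\<forall>x\<in>X. f x \<in> \<rat> \<and> 0 \<le> f x \<and> f x \<le> 1)"

definition f_coloring :: "'x set \<Rightarrow> ('x \<Rightarrow> 'x \<Rightarrow> bool) \<Rightarrow> ('x \<Rightarrow> real) \<Rightarrow> ('x \<Rightarrow> real set) \<Rightarrow> bool" where
  "f_coloring X adj f \<phi> \<longleftrightarrow>
     (\<forall>x\<in>X. \<phi> x \<in> sets lebesgue \<and> \<phi> x \<subseteq> {0..1} \<and> f x \<le> measure lebesgue (\<phi> x)) \<and>
     (\<forall>x\<in>X. \<forall>y\<in>X. adj x y \<longrightarrow> \<phi> x \<inter> \<phi> y = {})"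

end

theory Submission
  imports Defs
begin

text \<open>Clear denominators: if N is a common denominator of the demands, replace every edge e by
  N f(e) parallel copies. The hypothesis bounds every degree of the new multigraph by 2N/3, so by
  Shannon's bound (via Kempe chains) its edges can be properly colored with N colors.
  Giving e the union of the intervals [a/N, (a+1)/N) over the colors a of its copies is then an
  f-coloring of L(G).\<close>

definition two_ended_edges :: "'e set \<Rightarrow> ('e \<Rightarrow> 'v set) \<Rightarrow> bool" where
  "two_ended_edges F ends \<longleftrightarrow> (\<forall>e\<in>F. card (ends e) = 2)"

definition proper_edge_coloring :: "nat \<Rightarrow> 'e set \<Rightarrow> ('e \<Rightarrow> 'v set) \<Rightarrow> ('e \<Rightarrow> nat) \<Rightarrow> bool" where
  "proper_edge_coloring k F ends c \<longleftrightarrow> (\<forall>e\<in>F. c e < k) \<and>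
     (\<forall>e\<in>F. \<forall>e'\<in>F. e \<noteq> e' \<longrightarrow> ends e \<inter> ends e' \<noteq> {} \<longrightarrow> c e \<noteq> c e')"

definition missing_color :: "'e set \<Rightarrow> ('e \<Rightarrow> 'v set) \<Rightarrow> ('e \<Rightarrow> nat) \<Rightarrow> 'v \<Rightarrow> nat \<Rightarrow> bool" where
  "missing_color F ends c v a \<longleftrightarrow> (\<forall>e\<in>F. v \<in> ends e \<longrightarrow> c e \<noteq> a)"

definition common_missing_color ::
    "nat \<Rightarrow> 'e set \<Rightarrow> ('e \<Rightarrow> 'v set) \<Rightarrow> ('e \<Rightarrow> nat) \<Rightarrow> 'v \<Rightarrow> 'v \<Rightarrow> bool" where
  "common_missing_color k F ends c x y \<longleftrightarrow>
     (\<exists>a<k. missing_color F ends c x a \<and> missing_color F ends c y a)"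

lemma proper_edge_coloring_less:
  "proper_edge_coloring k F ends c \<Longrightarrow> e \<in> F \<Longrightarrow> c e < k"
  unfolding proper_edge_coloring_def by blast

lemma proper_edge_coloringD:
  "proper_edge_coloring k F ends c \<Longrightarrow> e \<in> F \<Longrightarrow> e' \<in> F \<Longrightarrow> e \<noteq> e' \<Longrightarrow>
    ends e \<inter> ends e' \<noteq> {} \<Longrightarrow> c e \<noteq> c e'"
  unfolding proper_edge_coloring_def by blast

lemma two_ended_edgesD:
  assumes "two_ended_edges F ends" "e \<in> F" "v \<in> ends e"
  obtains u where "ends e = {v, u}" "u \<noteq> v"
proof -
  obtain p q where pq: "ends e = {p, q}" "p \<noteq> q"
    using assms(1,2) unfolding two_ended_edges_def card_2_iff by blast
  show thesis
  proof (cases "v = p")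
    case True
    then show thesis using that pq by blast
  next
    case False
    then show thesis using that[of p] pq assms(3) by (simp add: insert_commute)
  qed
qed

lemma two_ended_edges_finite_ends:
  "two_ended_edges F ends \<Longrightarrow> e \<in> F \<Longrightarrow> finite (ends e)"
  unfolding two_ended_edges_def by (metis card.infinite zero_neq_numeral)

lemma mdegree_insert:
  assumes "finite F" "e0 \<notin> F"
  shows "mdegree (insert e0 F) ends v =
    (if v \<in> ends e0 then Suc (mdegree F ends v) else mdegree F ends v)"
proof -
  have "{e\<in>insert e0 F. v \<in> ends e} =
      (if v \<in> ends e0 then insert e0 {e\<in>F. v \<in> ends e} else {e\<in>F. v \<in> ends e})"
    by auto
  then show ?thesis unfolding mdegree_def using assms by simp
qed

lemma present_colors_eq_image:
  "{a. \<not> missing_color F ends c v a} = c ` {e\<in>F. v \<in> ends e}"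
  unfolding missing_color_def by auto

lemma card_present_colors_le_mdegree:
  "finite F \<Longrightarrow> card {a. \<not> missing_color F ends c v a} \<le> mdegree F ends v"
  unfolding present_colors_eq_image mdegree_def by (rule card_image_le) simp

lemma card_missing_colors_ge:
  assumes "finite F"
  shows "k \<le> card {a\<in>{..<k}. missing_color F ends c v a} + mdegree F ends v"
proof -
  have "{..<k} \<subseteq> {a\<in>{..<k}. missing_color F ends c v a} \<union> {a. \<not> missing_color F ends c v a}"
    by auto
  then have "k \<le> card ({a\<in>{..<k}. missing_color F ends c v a} \<union> {a. \<not> missing_color F ends c v a})"
    using card_mono[of _ "{..<k}"] assms by (simp add: present_colors_eq_image)
  also have "\<dots> \<le> card {a\<in>{..<k}. missing_color F ends c v a} + card {a. \<not> missing_color F ends c v a}"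
    by (rule card_Un_le)
  finally show ?thesis using card_present_colors_le_mdegree[OF assms, of ends c v] by linarith
qed

lemma proper_edge_coloring_insert:
  assumes c: "proper_edge_coloring k F ends c" and common: "common_missing_color k F ends c x y"
    and e0: "ends e0 = {x, y}" "e0 \<notin> F"
  shows "\<exists>c'. proper_edge_coloring k (insert e0 F) ends c'"
proof -
  obtain a where a: "a < k" "missing_color F ends c x a" "missing_color F ends c y a"
    using common unfolding common_missing_color_def by blast
  have "c e \<noteq> a" if "e \<in> F" "ends e \<inter> ends e0 \<noteq> {}" for e
    using a that e0 unfolding missing_color_def by auto
  then have "proper_edge_coloring k (insert e0 F) ends (c(e0 := a))"
    using c a(1) e0(2) unfolding proper_edge_coloring_def by (auto simp: Int_commute)
  then show ?thesis by blast
qed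

text \<open>If the color of the edge xz is missing at y, recoloring xz with a color missing at
  both x and z frees its old color at x.\<close>

lemma recolor_edge_common_missing:
  assumes c: "proper_edge_coloring k F ends c" and e1: "e1 \<in> F" "ends e1 = {x, z}"
    and "y \<noteq> x" "y \<noteq> z" and y: "missing_color F ends c y (c e1)"
    and g: "g < k" "missing_color F ends c x g" "missing_color F ends c z g"
  shows "\<exists>c'. proper_edge_coloring k F ends c' \<and> common_missing_color k F ends c' x y"
proof (intro exI conjI)
  let ?c = "c(e1 := g)"
  have g_new: "c e \<noteq> g" if "e \<in> F" "ends e \<inter> ends e1 \<noteq> {}" for e
    using g that e1 unfolding missing_color_def by auto
  then show "proper_edge_coloring k F ends ?c"
    using c g(1) unfolding proper_edge_coloring_def by (auto simp: Int_commute)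
  have "c e1 < k" "c e1 \<noteq> g"
    using c e1 g_new unfolding proper_edge_coloring_def by auto
  moreover have "missing_color F ends ?c x (c e1)"
    using c e1 \<open>c e1 \<noteq> g\<close> unfolding missing_color_def proper_edge_coloring_def by auto
  moreover have "missing_color F ends ?c y (c e1)"
    using y e1 \<open>y \<noteq> x\<close> \<open>y \<noteq> z\<close> unfolding missing_color_def by auto
  ultimately show "common_missing_color k F ends ?c x y"
    unfolding common_missing_color_def by blast
qed

subsection \<open>Kempe chains\<close>

definition kempe_edges :: "'e set \<Rightarrow> ('e \<Rightarrow> 'v set) \<Rightarrow> ('e \<Rightarrow> nat) \<Rightarrow> nat \<Rightarrow> nat \<Rightarrow> ('v \<times> 'v) set" where
  "kempe_edges F ends c a b = {(u, v). \<exists>e\<in>{e\<in>F. c e \<in> {a, b}}. ends e = {u, v}}"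

definition kempe_chain :: "'e set \<Rightarrow> ('e \<Rightarrow> 'v set) \<Rightarrow> ('e \<Rightarrow> nat) \<Rightarrow> nat \<Rightarrow> nat \<Rightarrow> 'v \<Rightarrow> 'v set" where
  "kempe_chain F ends c a b s = (kempe_edges F ends c a b)\<^sup>* `` {s}"

definition kempe_swap :: "'e set \<Rightarrow> ('e \<Rightarrow> 'v set) \<Rightarrow> ('e \<Rightarrow> nat) \<Rightarrow> nat \<Rightarrow> nat \<Rightarrow> 'v \<Rightarrow> 'e \<Rightarrow> nat" where
  "kempe_swap F ends c a b s e =
     (if e \<in> F \<and> c e \<in> {a, b} \<and> ends e \<inter> kempe_chain F ends c a b s \<noteq> {}
      then (if c e = a then b else a) else c e)"

lemma kempe_chain_refl: "s \<in> kempe_chain F ends c a b s"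
  by (simp add: kempe_chain_def)

lemma kempe_chain_closed:
  assumes "two_ended_edges F ends" "u \<in> kempe_chain F ends c a b s"
    and "e \<in> F" "c e \<in> {a, b}" "u \<in> ends e" "v \<in> ends e"
  shows "v \<in> kempe_chain F ends c a b s"
proof (cases "u = v")
  case False
  then have "ends e = {u, v}"
    using assms(1,3,5,6) unfolding two_ended_edges_def by (auto simp: card_2_iff)
  then have "(u, v) \<in> kempe_edges F ends c a b"
    using assms(3,4) unfolding kempe_edges_def by blast
  then show ?thesis
    using assms(2) unfolding kempe_chain_def by (meson Image_singleton_iff rtrancl_into_rtrancl)
qed (use assms in auto)

lemma kempe_chain_sym:
  assumes "v \<in> kempe_chain F ends c a b s"
  shows "s \<in> kempe_chain F ends c a b v"
proof -
  have "sym (kempe_edges F ends c a b)"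
    unfolding kempe_edges_def sym_def by (auto simp: insert_commute)
  then have "sym ((kempe_edges F ends c a b)\<^sup>*)" by (rule sym_rtrancl)
  then show ?thesis using assms unfolding kempe_chain_def sym_def by blast
qed

lemma kempe_chain_trans:
  "v \<in> kempe_chain F ends c a b s \<Longrightarrow> w \<in> kempe_chain F ends c a b v \<Longrightarrow>
    w \<in> kempe_chain F ends c a b s"
  unfolding kempe_chain_def by (meson Image_singleton_iff rtrancl_trans)

lemma finite_kempe_chain:
  assumes "finite F" "two_ended_edges F ends"
  shows "finite (kempe_chain F ends c a b s)"
proof -
  have "kempe_chain F ends c a b s \<subseteq> insert s (\<Union>(ends ` F))"
  proof
    fix v assume "v \<in> kempe_chain F ends c a b s"
    then have "(s, v) \<in> (kempe_edges F ends c a b)\<^sup>*" unfolding kempe_chain_def by simp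
    then show "v \<in> insert s (\<Union>(ends ` F))"
      by (cases rule: rtranclE) (auto simp: kempe_edges_def)
  qed
  then show ?thesis
    using assms two_ended_edges_finite_ends by (meson finite_UN_I finite_insert finite_subset)
qed

lemma kempe_swap_outside:
  assumes "two_ended_edges F ends" "v \<notin> kempe_chain F ends c a b s" "e \<in> F" "v \<in> ends e"
  shows "kempe_swap F ends c a b s e = c e"
proof -
  have "\<not> (c e \<in> {a, b} \<and> ends e \<inter> kempe_chain F ends c a b s \<noteq> {})"
    using kempe_chain_closed[OF assms(1) _ assms(3)] assms(2,4) by blast
  then show ?thesis unfolding kempe_swap_def by auto
qed

lemma missing_color_kempe_swap_outside:
  assumes "two_ended_edges F ends" "v \<notin> kempe_chain F ends c a b s"
  shows "missing_color F ends (kempe_swap F ends c a b s) v d \<longleftrightarrow> missing_color F ends c v d"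
  using kempe_swap_outside[OF assms] unfolding missing_color_def by auto

lemma missing_color_kempe_swap_inside:
  assumes "v \<in> kempe_chain F ends c a b s" "missing_color F ends c v b" "a \<noteq> b"
  shows "missing_color F ends (kempe_swap F ends c a b s) v a"
  using assms unfolding missing_color_def kempe_swap_def by auto

text \<open>Two edges at a common vertex w are either both swapped or both not, according to
  whether w lies on the chain.\<close>

lemma proper_edge_coloring_kempe_swap:
  assumes c: "proper_edge_coloring k F ends c" and F: "two_ended_edges F ends"
    and "a < k" "b < k" "a \<noteq> b"
  shows "proper_edge_coloring k F ends (kempe_swap F ends c a b s)"
  unfolding proper_edge_coloring_def
proof (intro conjI ballI impI)
  fix e assume "e \<in> F"
  then show "kempe_swap F ends c a b s e < k"
    using assms unfolding proper_edge_coloring_def kempe_swap_def by auto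
next
  fix e e' assume e: "e \<in> F" "e' \<in> F" "e \<noteq> e'" "ends e \<inter> ends e' \<noteq> {}"
  let ?C = "kempe_chain F ends c a b s"
  have distinct: "c e \<noteq> c e'" using c e unfolding proper_edge_coloring_def by blast
  obtain w where w: "w \<in> ends e" "w \<in> ends e'" using e(4) by blast
  have swap_at_w: "kempe_swap F ends c a b s x =
      (if c x \<in> {a, b} \<and> w \<in> ?C then (if c x = a then b else a) else c x)"
    if "x \<in> F" "w \<in> ends x" for x
    using kempe_chain_closed[OF F _ that(1) _ _ that(2)] that unfolding kempe_swap_def by auto
  show "kempe_swap F ends c a b s e \<noteq> kempe_swap F ends c a b s e'"
    unfolding swap_at_w[OF e(1) w(1)] swap_at_w[OF e(2) w(2)]
    using distinct \<open>a \<noteq> b\<close> by auto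
qed

lemma rtrancl_last_step_closer:
  assumes "(s, t) \<in> R\<^sup>*" "t \<noteq> s"
  defines "level \<equiv> \<lambda>t. LEAST n. (s, t) \<in> R ^^ n"
  shows "\<exists>u. (s, u) \<in> R\<^sup>* \<and> (u, t) \<in> R \<and> Suc (level u) = level t"
proof -
  have reach: "(s, t') \<in> R ^^ level t'" if st': "(s, t') \<in> R\<^sup>*" for t'
  proof -
    obtain n where "(s, t') \<in> R ^^ n" using rtrancl_imp_relpow[OF st'] ..
    then show ?thesis unfolding level_def by (rule LeastI)
  qed
  have least: "level t' \<le> n" if "(s, t') \<in> R ^^ n" for t' n
    unfolding level_def using that by (rule Least_le)
  have "level t \<noteq> 0"
  proof
    assume "level t = 0"
    then show False using reach[OF assms(1)] assms(2) by simp
  qed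
  then obtain n where n: "level t = Suc n" using not0_implies_Suc by blast
  then have "(s, t) \<in> R ^^ Suc n" using reach[OF assms(1)] by simp
  then obtain u where u: "(s, u) \<in> R ^^ n" "(u, t) \<in> R" by (rule relpow_Suc_E)
  have su: "(s, u) \<in> R\<^sup>*" using u(1) relpow_imp_rtrancl by blast
  have "(s, t) \<in> R ^^ Suc (level u)" using reach[OF su] u(2) by auto
  then have "level t \<le> Suc (level u)" by (rule least)
  then have "Suc (level u) = level t" using least[OF u(1)] n by simp
  then show ?thesis using su u(2) by blast
qed

text \<open>A connected graph on C has at least |C| - 1 edges: each vertex other than s is
  assigned the last edge of a shortest path from s, and these edges are distinct.\<close>

lemma card_component_le_Suc_card_edges:
  fixes K :: "'e set" and ends :: "'e \<Rightarrow> 'v set"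
  defines "R \<equiv> {(u, v). \<exists>e\<in>K. ends e = {u, v}}"
  assumes "finite K" "finite (R\<^sup>* `` {s})"
  shows "card (R\<^sup>* `` {s}) \<le> Suc (card {e\<in>K. ends e \<subseteq> R\<^sup>* `` {s}})"
proof -
  define C where "C = R\<^sup>* `` {s}"
  define level where "level t = (LEAST n. (s, t) \<in> R ^^ n)" for t
  have "\<exists>e\<in>K. \<exists>u\<in>C. ends e = {u, t} \<and> Suc (level u) = level t" if "t \<in> C - {s}" for t
    using rtrancl_last_step_closer[of s t R] that unfolding C_def level_def R_def by fastforce
  then obtain p where p: "\<And>t. t \<in> C - {s} \<Longrightarrow>
      p t \<in> K \<and> (\<exists>u\<in>C. ends (p t) = {u, t} \<and> Suc (level u) = level t)"
    by metis
  have "inj_on p (C - {s})"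
  proof (rule inj_onI)
    fix t1 t2 assume t: "t1 \<in> C - {s}" "t2 \<in> C - {s}" "p t1 = p t2"
    obtain u1 where "ends (p t1) = {u1, t1}" "Suc (level u1) = level t1"
      using p[OF t(1)] by blast
    moreover obtain u2 where "ends (p t2) = {u2, t2}" "Suc (level u2) = level t2"
      using p[OF t(2)] by blast
    ultimately show "t1 = t2" using t(3) by (auto simp: doubleton_eq_iff)
  qed
  moreover have "p ` (C - {s}) \<subseteq> {e\<in>K. ends e \<subseteq> C}"
  proof (rule image_subsetI)
    fix t assume t: "t \<in> C - {s}"
    then obtain u where "p t \<in> K" "u \<in> C" "ends (p t) = {u, t}" using p by blast
    then show "p t \<in> {e\<in>K. ends e \<subseteq> C}" using t by simp
  qed
  ultimately have "card (C - {s}) \<le> card {e\<in>K. ends e \<subseteq> C}"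
    using card_inj_on_le assms(2) by fastforce
  moreover have "s \<in> C" unfolding C_def by simp
  ultimately show ?thesis using assms(3) unfolding C_def by (simp add: card_Diff_singleton)
qed

lemma card_present_colors_in_kempe_chain:
  fixes s :: 'v
  assumes c: "proper_edge_coloring k F ends c" and F: "two_ended_edges F ends" "finite F"
    and d: "d \<in> {a, b}"
  defines "C \<equiv> kempe_chain F ends c a b s"
  shows "card {v\<in>C. \<not> missing_color F ends c v d} = 2 * card {e\<in>F. c e = d \<and> ends e \<subseteq> C}"
proof -
  let ?K = "{e\<in>F. c e = d \<and> ends e \<subseteq> C}"
  have "{v\<in>C. \<not> missing_color F ends c v d} = \<Union>(ends ` ?K)"
    using kempe_chain_closed[OF F(1)] d unfolding C_def missing_color_def by blast
  moreover have "card (\<Union>(ends ` ?K)) = (\<Sum>e\<in>?K. card (ends e))"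
  proof (rule card_UN_disjoint)
    show "\<forall>e\<in>?K. \<forall>e'\<in>?K. e \<noteq> e' \<longrightarrow> ends e \<inter> ends e' = {}"
      using c unfolding proper_edge_coloring_def by blast
  qed (use F two_ended_edges_finite_ends in auto)
  moreover have "(\<Sum>e\<in>?K. card (ends e)) = 2 * card ?K"
    using F(1) unfolding two_ended_edges_def by simp
  ultimately show ?thesis by simp
qed

text \<open>A vertex of C misses a unless it lies on one of the pairwise disjoint a-edges of C, and
  likewise for b. Being connected, C has at least |C| - 1 edges, so at most two pairs
  (vertex, missing color) remain.\<close>

lemma kempe_chain_missing_count:
  fixes s :: 'v
  assumes c: "proper_edge_coloring k F ends c" and F: "two_ended_edges F ends" "finite F"
    and "a \<noteq> b"
  defines "C \<equiv> kempe_chain F ends c a b s"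
  shows "card {v\<in>C. missing_color F ends c v a} + card {v\<in>C. missing_color F ends c v b} \<le> 2"
proof -
  have fin: "finite C" unfolding C_def using finite_kempe_chain[OF F(2,1)] .
  define Ka where "Ka = {e\<in>F. c e = a \<and> ends e \<subseteq> C}"
  define Kb where "Kb = {e\<in>F. c e = b \<and> ends e \<subseteq> C}"
  have split: "card {v\<in>C. P v} + card {v\<in>C. \<not> P v} = card C" for P
  proof -
    have "card ({v\<in>C. P v} \<union> {v\<in>C. \<not> P v}) = card {v\<in>C. P v} + card {v\<in>C. \<not> P v}"
      using fin by (intro card_Un_disjoint) auto
    moreover have "{v\<in>C. P v} \<union> {v\<in>C. \<not> P v} = C" by auto
    ultimately show ?thesis by simp
  qed
  have "card C \<le> Suc (card {e\<in>{e\<in>F. c e \<in> {a, b}}. ends e \<subseteq> C})"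
    using card_component_le_Suc_card_edges[of "{e\<in>F. c e \<in> {a, b}}" ends s] fin F(2)
    unfolding C_def kempe_chain_def kempe_edges_def by simp
  also have "{e\<in>{e\<in>F. c e \<in> {a, b}}. ends e \<subseteq> C} = Ka \<union> Kb"
    unfolding Ka_def Kb_def by auto
  also have "card (Ka \<union> Kb) = card Ka + card Kb"
    using F(2) \<open>a \<noteq> b\<close> by (intro card_Un_disjoint) (auto simp: Ka_def Kb_def)
  finally have "card C \<le> Suc (card Ka + card Kb)" .
  moreover have "card {v\<in>C. \<not> missing_color F ends c v a} = 2 * card Ka"
    "card {v\<in>C. \<not> missing_color F ends c v b} = 2 * card Kb"
    unfolding C_def Ka_def Kb_def by (rule card_present_colors_in_kempe_chain[OF c F]; simp)+
  ultimately show ?thesis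
    using split[of "\<lambda>v. missing_color F ends c v a"] split[of "\<lambda>v. missing_color F ends c v b"]
    by linarith
qed

text \<open>The step of Kempe's argument: either the (\<alpha>, g)-chain from y avoids x or z, and swapping
  it (followed by a recoloring of xz) frees a common color at x and y; or it contains x, y and z,
  three pairs (vertex, missing color) in one chain.\<close>

lemma kempe_recolor_common_missing:
  assumes c: "proper_edge_coloring k F ends c" and F: "two_ended_edges F ends" "finite F"
    and e1: "e1 \<in> F" "ends e1 = {x, z}" and "y \<noteq> x" "y \<noteq> z"
    and y: "missing_color F ends c y (c e1)"
    and \<alpha>: "\<alpha> < k" "missing_color F ends c x \<alpha>"
    and g: "g < k" "missing_color F ends c y g" "missing_color F ends c z g"
  shows "\<exists>c'. proper_edge_coloring k F ends c' \<and> common_missing_color k F ends c' x y"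
proof (rule ccontr)
  assume stuck: "\<not> ?thesis"
  have "\<alpha> \<noteq> g" using stuck c \<alpha> g unfolding common_missing_color_def by blast
  let ?C = "kempe_chain F ends c \<alpha> g y"
  let ?swap = "kempe_swap F ends c \<alpha> g"
  have proper_swap: "proper_edge_coloring k F ends (?swap s)" for s
    using proper_edge_coloring_kempe_swap[OF c F(1) \<alpha>(1) g(1) \<open>\<alpha> \<noteq> g\<close>] .
  have x_in: "x \<in> ?C"
  proof (rule ccontr)
    assume x_out: "x \<notin> ?C"
    have "common_missing_color k F ends (?swap y) x y"
      using missing_color_kempe_swap_inside[OF kempe_chain_refl g(2) \<open>\<alpha> \<noteq> g\<close>]
        missing_color_kempe_swap_outside[OF F(1) x_out] \<alpha>
      unfolding common_missing_color_def by blast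
    then show False using stuck proper_swap by blast
  qed
  have z_in: "z \<in> ?C"
  proof (rule ccontr)
    assume z_out: "z \<notin> ?C"
    let ?Cz = "kempe_chain F ends c \<alpha> g z"
    have x_out: "x \<notin> ?Cz" using x_in z_out kempe_chain_sym kempe_chain_trans by metis
    have y_out: "y \<notin> ?Cz" using z_out kempe_chain_sym by metis
    have "c e1 \<noteq> \<alpha>" "c e1 \<noteq> g" using e1 \<alpha>(2) g(3) unfolding missing_color_def by auto
    then have "?swap z e1 = c e1" unfolding kempe_swap_def by auto
    then have "missing_color F ends (?swap z) y (?swap z e1)"
      using missing_color_kempe_swap_outside[OF F(1) y_out] y by simp
    moreover have "missing_color F ends (?swap z) x \<alpha>"
      using missing_color_kempe_swap_outside[OF F(1) x_out] \<alpha>(2) by simp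
    moreover have "missing_color F ends (?swap z) z \<alpha>"
      using missing_color_kempe_swap_inside[OF kempe_chain_refl g(3) \<open>\<alpha> \<noteq> g\<close>] .
    ultimately have "\<exists>c'. proper_edge_coloring k F ends c' \<and> common_missing_color k F ends c' x y"
      using recolor_edge_common_missing[OF proper_swap e1 \<open>y \<noteq> x\<close> \<open>y \<noteq> z\<close>] \<alpha>(1) by blast
    then show False using stuck by blast
  qed
  have fin: "finite ?C" using finite_kempe_chain[OF F(2,1)] .
  have "card {x} \<le> card {v\<in>?C. missing_color F ends c v \<alpha>}"
    using x_in \<alpha>(2) fin by (intro card_mono) auto
  moreover have "card {y, z} \<le> card {v\<in>?C. missing_color F ends c v g}"
    using z_in kempe_chain_refl g(2,3) fin by (intro card_mono) auto
  ultimately show False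
    using kempe_chain_missing_count[OF c F \<open>\<alpha> \<noteq> g\<close>, of y] \<open>y \<noteq> z\<close> by simp
qed

text \<open>If no recoloring frees a common color at x and y, take an edge xz whose color is missing
  at y: every color missing at x or y is present at z, and counting colors at x, y and z
  contradicts the degree bounds.\<close>

lemma common_missing_color_by_recoloring:
  assumes c: "proper_edge_coloring k F ends c" and F: "two_ended_edges F ends" "finite F"
    and "y \<noteq> x"
    and deg_xy: "3 * (mdegree F ends x + 1) \<le> 2 * k" "3 * (mdegree F ends y + 1) \<le> 2 * k"
    and deg: "\<And>v. 3 * mdegree F ends v \<le> 2 * k"
  shows "\<exists>c'. proper_edge_coloring k F ends c' \<and> common_missing_color k F ends c' x y"
proof (rule ccontr)
  assume stuck: "\<not> ?thesis"
  define M where "M v = {a\<in>{..<k}. missing_color F ends c v a}" for v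
  have M_ge: "k \<le> card (M v) + mdegree F ends v" for v
    unfolding M_def by (rule card_missing_colors_ge[OF F(2)])
  have disjoint: "M x \<inter> M y = {}"
    using stuck c unfolding M_def common_missing_color_def by blast
  have "0 < card (M x)" using M_ge[of x] deg_xy(1) by (simp only: distrib_left)
  moreover have "0 < card (M y)" using M_ge[of y] deg_xy(2) by (simp only: distrib_left)
  ultimately obtain \<alpha> \<beta> where \<alpha>: "\<alpha> \<in> M x" and \<beta>: "\<beta> \<in> M y" by fastforce
  then obtain e1 where e1: "e1 \<in> F" "x \<in> ends e1" "c e1 = \<beta>"
    using disjoint unfolding M_def missing_color_def by blast
  obtain z where z: "ends e1 = {x, z}" "z \<noteq> x" using two_ended_edgesD[OF F(1) e1(1,2)] .
  have "y \<noteq> z" using \<beta> e1 z unfolding M_def missing_color_def by auto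
  have present: "\<not> missing_color F ends c z a" if "a \<in> M x \<union> M y" for a
  proof
    assume "missing_color F ends c z a"
    then have "\<exists>c'. proper_edge_coloring k F ends c' \<and> common_missing_color k F ends c' x y"
      using that recolor_edge_common_missing[OF c e1(1) z(1) \<open>y \<noteq> x\<close> \<open>y \<noteq> z\<close>]
        kempe_recolor_common_missing[OF c F e1(1) z(1) \<open>y \<noteq> x\<close> \<open>y \<noteq> z\<close>] \<alpha> \<beta> e1(3)
      unfolding M_def by blast
    then show False using stuck by blast
  qed
  have "card (M x) + card (M y) = card (M x \<union> M y)"
    using disjoint unfolding M_def by (simp add: card_Un_disjoint)
  also have "\<dots> \<le> card {a. \<not> missing_color F ends c z a}"
  proof (rule card_mono)
    show "finite {a. \<not> missing_color F ends c z a}"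
      using F(2) by (simp add: present_colors_eq_image)
    show "M x \<union> M y \<subseteq> {a. \<not> missing_color F ends c z a}" using present by blast
  qed
  also have "\<dots> \<le> mdegree F ends z" by (rule card_present_colors_le_mdegree[OF F(2)])
  finally show False
    using M_ge[of x] M_ge[of y] deg_xy deg[of z] by (simp only: distrib_left)
qed

lemma proper_edge_coloring_extend:
  assumes c: "proper_edge_coloring k F ends c"
    and F: "two_ended_edges (insert e0 F) ends" "finite F" "e0 \<notin> F"
    and deg: "\<And>v. 3 * mdegree (insert e0 F) ends v \<le> 2 * k"
  shows "\<exists>c'. proper_edge_coloring k (insert e0 F) ends c'"
proof -
  have F': "two_ended_edges F ends" using F(1) unfolding two_ended_edges_def by simp
  obtain x y where xy: "ends e0 = {x, y}" "y \<noteq> x"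
    using F(1) unfolding two_ended_edges_def card_2_iff by blast
  have deg_F: "mdegree (insert e0 F) ends v =
      (if v \<in> {x, y} then mdegree F ends v + 1 else mdegree F ends v)" for v
    using mdegree_insert[OF F(2,3), of ends v] xy(1) by auto
  have "3 * mdegree F ends v \<le> 2 * k" for v
    using deg[of v] deg_F[of v] by (simp split: if_splits)
  then obtain c' where "proper_edge_coloring k F ends c'" "common_missing_color k F ends c' x y"
    using common_missing_color_by_recoloring[OF c F' F(2) xy(2)] deg[of x] deg[of y] deg_F
    by auto
  from proper_edge_coloring_insert[OF this xy(1) F(3)] show ?thesis .
qed

theorem proper_edge_coloring_exists:
  assumes "finite F" "two_ended_edges F ends" "\<And>v. 3 * mdegree F ends v \<le> 2 * k"
  shows "\<exists>c. proper_edge_coloring k F ends c"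
  using assms
proof (induction F rule: finite_induct)
  case empty
  then show ?case unfolding proper_edge_coloring_def by auto
next
  case (insert e0 F)
  have "two_ended_edges F ends" using insert.prems(1) unfolding two_ended_edges_def by simp
  moreover have "3 * mdegree F ends v \<le> 2 * k" for v
    using insert.prems(2)[of v] mdegree_insert[OF insert.hyps, of ends v] by (simp split: if_splits)
  ultimately obtain c where "proper_edge_coloring k F ends c" using insert.IH by blast
  from proper_edge_coloring_extend[OF this insert.prems(1) insert.hyps insert.prems(2)]
  show ?case .
qed

subsection \<open>From edge colorings to fractional colorings\<close>

lemma rationals_common_denominator:
  assumes "finite S" "\<forall>x\<in>S. g x \<in> \<rat>"
  shows "\<exists>N::nat. N > 0 \<and> (\<forall>x\<in>S. real N * g x \<in> \<int>)"
  using assms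
proof (induction S rule: finite_induct)
  case empty
  then show ?case by (intro exI[of _ 1]) simp
next
  case (insert x S)
  then obtain N :: nat where N: "N > 0" "\<forall>y\<in>S. real N * g y \<in> \<int>" by auto
  obtain p q where pq: "q > 0" "g x = of_int p / of_int q"
    using insert.prems by (auto elim: Rats_cases')
  define M where "M = N * nat q"
  have "real M * g y \<in> \<int>" if y: "y \<in> insert x S" for y
  proof (cases "y = x")
    case True
    then have "real M * g y = of_int (int N * p)" using pq unfolding M_def by (simp add: field_simps)
    then show ?thesis by simp
  next
    case False
    then obtain z where "real N * g y = of_int z" using N(2) y by (auto elim: Ints_cases)
    then have "real M * g y = of_int (z * q)" using pq unfolding M_def by (simp add: algebra_simps)
    then show ?thesis by simp
  qed
  moreover have "M > 0" using N pq unfolding M_def by simp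
  ultimately show ?case by blast
qed

definition color_interval :: "nat \<Rightarrow> nat \<Rightarrow> real set" where
  "color_interval N a = {real a / real N ..< (real a + 1) / real N}"

lemma color_interval_disjoint:
  assumes "a \<noteq> b"
  shows "color_interval N a \<inter> color_interval N b = {}"
proof (rule ccontr)
  assume "color_interval N a \<inter> color_interval N b \<noteq> {}"
  then obtain t where "t \<in> color_interval N a" "t \<in> color_interval N b" by blast
  moreover have "N > 0" using calculation unfolding color_interval_def by (cases N) auto
  ultimately have "real a \<le> t * N" "t * N < real a + 1" "real b \<le> t * N" "t * N < real b + 1"
    unfolding color_interval_def by (auto simp: field_simps)
  then show False using assms by linarith
qed

lemma color_interval_subset:
  assumes "a < N"
  shows "color_interval N a \<subseteq> {0..1}"
proof
  fix t assume "t \<in> color_interval N a"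
  then have "real a \<le> t * N" "t * N < real a + 1"
    using assms unfolding color_interval_def by (auto simp: field_simps)
  moreover have "real a + 1 \<le> real N" using assms by simp
  ultimately have "0 \<le> t * N" "t * N \<le> 1 * N" by linarith+
  then show "t \<in> {0..1}"
    using assms by (simp add: zero_le_mult_iff mult_le_cancel_right)
qed

lemma measure_color_interval:
  assumes "N > 0"
  shows "measure lebesgue (color_interval N a) = 1 / real N"
proof -
  have "real a / real N \<le> (real a + 1) / real N" by (simp add: divide_right_mono)
  then have "measure lebesgue (color_interval N a) = (real a + 1) / real N - real a / real N"
    unfolding color_interval_def by simp
  also have "\<dots> = 1 / real N" by (simp add: diff_divide_distrib[symmetric])
  finally show ?thesis .
qed

text \<open>Sigma E (\<lambda>e. {..<n e}) with end map ends \<circ> fst is G with every edge e replaced by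
  n e parallel copies (e, i).\<close>

lemma f_coloring_of_edge_coloring_of_copies:
  assumes ends: "\<And>e. e \<in> E \<Longrightarrow> ends e \<noteq> {}" and "N > 0"
    and c: "proper_edge_coloring N (Sigma E (\<lambda>e. {..<n e})) (ends \<circ> fst) c"
    and f: "\<And>e. e \<in> E \<Longrightarrow> f e \<le> real (n e) / real N"
  shows "f_coloring E (line_adj E ends) f (\<lambda>e. \<Union>i<n e. color_interval N (c (e, i)))"
proof -
  have disjoint: "color_interval N (c (e, i)) \<inter> color_interval N (c (e', j)) = {}"
    if "e \<in> E" "e' \<in> E" "i < n e" "j < n e'" "e \<noteq> e' \<or> i \<noteq> j" "ends e \<inter> ends e' \<noteq> {}"
    for e e' i j
    using that by (intro color_interval_disjoint proper_edge_coloringD[OF c]) auto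
  have measure: "measure lebesgue (\<Union>i<n e. color_interval N (c (e, i))) = real (n e) / real N"
    if e: "e \<in> E" for e
  proof -
    have "measure lebesgue (\<Union>i<n e. color_interval N (c (e, i))) =
        (\<Sum>i<n e. measure lebesgue (color_interval N (c (e, i))))"
    proof (rule measure_finite_Union)
      show "(\<lambda>i. color_interval N (c (e, i))) ` {..<n e} \<subseteq> sets lebesgue"
        unfolding color_interval_def by auto
      show "disjoint_family_on (\<lambda>i. color_interval N (c (e, i))) {..<n e}"
        using disjoint[OF e e] ends[OF e] unfolding disjoint_family_on_def by simp
      show "emeasure lebesgue (color_interval N (c (e, i))) \<noteq> \<infinity>" for i
        unfolding color_interval_def by (simp add: divide_right_mono)
    qed simp
    then show ?thesis using measure_color_interval[OF \<open>N > 0\<close>] by simp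
  qed
  show ?thesis
    unfolding f_coloring_def
  proof (intro conjI ballI impI)
    fix e assume e: "e \<in> E"
    show "(\<Union>i<n e. color_interval N (c (e, i))) \<in> sets lebesgue"
      unfolding color_interval_def by auto
    show "(\<Union>i<n e. color_interval N (c (e, i))) \<subseteq> {0..1}"
    proof (rule UN_least)
      fix i assume "i \<in> {..<n e}"
      then show "color_interval N (c (e, i)) \<subseteq> {0..1}"
        using e by (intro color_interval_subset proper_edge_coloring_less[OF c]) simp
    qed
    show "f e \<le> measure lebesgue (\<Union>i<n e. color_interval N (c (e, i)))"
      using f[OF e] measure[OF e] by simp
  next
    fix e e' assume "e \<in> E" "e' \<in> E" "line_adj E ends e e'"
    then show "(\<Union>i<n e. color_interval N (c (e, i))) \<inter> (\<Union>j<n e'. color_interval N (c (e', j))) = {}"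
      using disjoint unfolding line_adj_def by blast
  qed
qed

lemma mdegree_copies:
  assumes "finite E"
  shows "mdegree (Sigma E (\<lambda>e. {..<n e})) (ends \<circ> fst) v = (\<Sum>e\<in>{e\<in>E. v \<in> ends e}. n e)"
proof -
  have "{p \<in> Sigma E (\<lambda>e. {..<n e}). v \<in> (ends \<circ> fst) p} = Sigma {e\<in>E. v \<in> ends e} (\<lambda>e. {..<n e})"
    by auto
  then show ?thesis unfolding mdegree_def using assms by (simp add: card_SigmaI)
qed

lemma sum_demands_at_vertex_le:
  assumes "finite E" "two_ended_edges E ends"
    and f: "\<And>e u v. e \<in> E \<Longrightarrow> ends e = {u, v} \<Longrightarrow>
      f e \<le> 2 / (3 * real (max (mdegree E ends u) (mdegree E ends v)))"
  shows "(\<Sum>e\<in>{e\<in>E. v \<in> ends e}. f e) \<le> 2 / 3"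
proof -
  let ?Ev = "{e\<in>E. v \<in> ends e}"
  have "f e \<le> 2 / (3 * real (card ?Ev))" if e: "e \<in> ?Ev" for e
  proof -
    obtain u where "ends e = {v, u}" using two_ended_edgesD[OF assms(2)] e by blast
    then have "f e \<le> 2 / (3 * real (max (card ?Ev) (mdegree E ends u)))"
      using f e unfolding mdegree_def by blast
    also have "\<dots> \<le> 2 / (3 * real (card ?Ev))"
    proof (rule divide_left_mono)
      have "card ?Ev > 0" using e assms(1) by (auto simp: card_gt_0_iff)
      then show "0 < 3 * real (max (card ?Ev) (mdegree E ends u)) * (3 * real (card ?Ev))"
        by (simp add: max_def)
    qed simp_all
    finally show ?thesis .
  qed
  then have "(\<Sum>e\<in>?Ev. f e) \<le> real (card ?Ev) * (2 / (3 * real (card ?Ev)))"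
    using sum_bounded_above[of ?Ev f] by blast
  also have "\<dots> \<le> 2 / 3" by (cases "card ?Ev = 0") auto
  finally show ?thesis .
qed

lemma mdegree_copies_le:
  assumes "finite E" "two_ended_edges E ends"
    and f: "\<And>e u v. e \<in> E \<Longrightarrow> ends e = {u, v} \<Longrightarrow>
      f e \<le> 2 / (3 * real (max (mdegree E ends u) (mdegree E ends v)))"
    and n: "\<And>e. e \<in> E \<Longrightarrow> real (n e) = real N * f e"
  shows "3 * mdegree (Sigma E (\<lambda>e. {..<n e})) (ends \<circ> fst) v \<le> 2 * N"
proof -
  have "real (mdegree (Sigma E (\<lambda>e. {..<n e})) (ends \<circ> fst) v) =
      real N * (\<Sum>e\<in>{e\<in>E. v \<in> ends e}. f e)"
    using n by (simp add: mdegree_copies[OF assms(1)] sum_distrib_left)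
  also have "\<dots> \<le> real N * (2 / 3)"
    using sum_demands_at_vertex_le[OF assms(1,2) f] by (intro mult_left_mono) auto
  finally show ?thesis by linarith
qed

theorem theorem6p2:
  fixes V :: "'v set" and E :: "'e set" and ends :: "'e \<Rightarrow> 'v set" and f :: "'e \<Rightarrow> real"
  assumes "multigraph V E ends"
    and "demand_function E f"
    and "\<And>e u v. e \<in> E \<Longrightarrow> ends e = {u, v} \<Longrightarrow>
           f e \<le> 2 / (3 * real (max (mdegree E ends u) (mdegree E ends v)))"
  shows "\<exists>\<phi>. f_coloring E (line_adj E ends) f \<phi>"
proof -
  have fin: "finite E" and E: "two_ended_edges E ends"
    using assms(1) unfolding multigraph_def two_ended_edges_def by auto
  obtain N :: nat where N: "N > 0" "\<forall>e\<in>E. real N * f e \<in> \<int>"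
    using rationals_common_denominator[OF fin] assms(2) unfolding demand_function_def by blast
  define n where "n e = nat \<lfloor>real N * f e\<rfloor>" for e
  have n: "real (n e) = real N * f e" if "e \<in> E" for e
    using N(2) assms(2) that unfolding n_def demand_function_def by (auto elim!: Ints_cases)
  have "finite (Sigma E (\<lambda>e. {..<n e}))" using fin by simp
  moreover have "two_ended_edges (Sigma E (\<lambda>e. {..<n e})) (ends \<circ> fst)"
    using E unfolding two_ended_edges_def by auto
  moreover have "3 * mdegree (Sigma E (\<lambda>e. {..<n e})) (ends \<circ> fst) v \<le> 2 * N" for v
    by (rule mdegree_copies_le[OF fin E assms(3)]) (use n in auto)
  ultimately obtain c where c: "proper_edge_coloring N (Sigma E (\<lambda>e. {..<n e})) (ends \<circ> fst) c"
    using proper_edge_coloring_exists by blast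
  have "ends e \<noteq> {}" if "e \<in> E" for e
    using E that unfolding two_ended_edges_def by fastforce
  moreover have "f e \<le> real (n e) / real N" if "e \<in> E" for e
    using n[OF that] N(1) by simp
  ultimately show ?thesis using f_coloring_of_edge_coloring_of_copies[OF _ N(1) c] by blast
qed

end
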